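(* Let $n\ge w\ge t\ge 1$ and $q,q'\ge 1$ be integers. Let $S\subset Q_{q*}^n$ be an $A(n,q,w,t)$ design. For each pair consisting of a codeword $a\in S$, whose non-$*$ entries in increasing order of position are $a^1,\dots,a^t$, and a word $(b_1,\dots,b_t)\in Q_{q'}^t$, form the word in $(Q_q\times Q_{q'})_*^n$ which has $*$ exactly where $a$ has $*$ and whose $j$-th non-$*$ entry (in increasing order of position) is $(a^j,b_j)$, $j=1,\dots,t$. Identifying $Q_q\times Q_{q'}$ with $Q_{qq'}$, let $U\subset Q_{qq'*}^n$ be the set of all such words. Then $U$ is an $A(n,qq',w,t)$ design.
   Context: For an integer $q\ge1$, $Q_q=\{0,1,\dots,q-1\}$ and $Q_{q*}=Q_q\cup\{*\}$ (for a finite alphabet $A$, $A_*=A\cup\{*\}$). The weight of a word $u\in Q_{q*}^n$ is $n$ minus the number of $*$ symbols in $u$. For $u,v\in Q_{q*}^n$ we say $u$ extends $v$ if $u_i=v_i$ for every position $i$ with $v_i\neq *$. An $A(n,q,w,t)$ design is a set $S$ of words of weight $t$ in $Q_{q*}^n$ such that every word of weight $w$ in $Q_{q*}^n$ extends exactly one element of $S$. *)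

theory Defs
  imports Main
begin

text \<open>Words of length n over Q_{q*}: lists of length n with entries None (the star)
  or Some a with a < q.\<close>
definition words :: "nat \<Rightarrow> nat \<Rightarrow> nat option list set" where
  "words q n = {u. length u = n \<and> (\<forall>x\<in>set u. case x of None \<Rightarrow> True | Some a \<Rightarrow> a < q)}"

definition weight :: "nat option list \<Rightarrow> nat" where
  "weight u = length (filter (\<lambda>x. x \<noteq> None) u)"

definition extends :: "nat option list \<Rightarrow> nat option list \<Rightarrow> bool" where
  "extends u v \<longleftrightarrow> length u = length v \<and> (\<forall>i < length v. v ! i \<noteq> None \<longrightarrow> u ! i = v ! i)"

definition is_design :: "nat \<Rightarrow> nat \<Rightarrow> nat \<Rightarrow> nat \<Rightarrow> nat option list set \<Rightarrow> bool" where
  "is_design n q w t S \<longleftrightarrow>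
     S \<subseteq> words q n \<and> (\<forall>s\<in>S. weight s = t) \<and>
     (\<forall>u\<in>words q n. weight u = w \<longrightarrow> (\<exists>!s. s \<in> S \<and> extends u s))"

text \<open>Identification of Q_q x Q_{q'} with Q_{qq'}: (x,y) is identified with x*q' + y.\<close>
definition pair_code :: "nat \<Rightarrow> nat \<Rightarrow> nat \<Rightarrow> nat" where
  "pair_code q' x y = x * q' + y"

fun merge :: "nat \<Rightarrow> nat option list \<Rightarrow> nat list \<Rightarrow> nat option list" where
  "merge q' [] bs = []"
| "merge q' (None # as) bs = None # merge q' as bs"
| "merge q' (Some x # as) bs = Some (pair_code q' x (hd bs)) # merge q' as (tl bs)"

definition product_design :: "nat \<Rightarrow> nat \<Rightarrow> nat option list set \<Rightarrow> nat option list set" where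
  "product_design q' t S =
     {merge q' a b | a b. a \<in> S \<and> length b = t \<and> (\<forall>y\<in>set b. y < q')}"

end

theory Submission
  imports Defs
begin

text \<open>Under the identification of Q_q \<times> Q_q' with Q_qq', the product design is exactly the
  preimage of S under the projection to the first coordinate. A word u of weight w projects to a
  word of weight w, which extends a unique codeword a \<in> S; the words of the preimage extended by
  u must have the star pattern of a and agree with u elsewhere, so there is exactly one of them.\<close>

definition project_fst :: "nat \<Rightarrow> nat option list \<Rightarrow> nat option list" where
  "project_fst q' s = map (map_option (\<lambda>z. z div q')) s"

fun second_coords :: "nat \<Rightarrow> nat option list \<Rightarrow> nat list" where
  "second_coords q' [] = []"
| "second_coords q' (None # s) = second_coords q' s"
| "second_coords q' (Some z # s) = z mod q' # second_coords q' s"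

definition restrict_support :: "nat option list \<Rightarrow> nat option list \<Rightarrow> nat option list" where
  "restrict_support a u = map2 (\<lambda>x y. if x = None then None else y) a u"

lemma weight_simps [simp]:
  "weight [] = 0" "weight (None # s) = weight s" "weight (Some z # s) = Suc (weight s)"
  by (auto simp: weight_def)

lemma project_fst_simps [simp]:
  "project_fst q' [] = []"
  "project_fst q' (None # s) = None # project_fst q' s"
  "project_fst q' (Some z # s) = Some (z div q') # project_fst q' s"
  by (auto simp: project_fst_def)

lemma length_project_fst [simp]: "length (project_fst q' s) = length s"
  by (simp add: project_fst_def)

lemma nth_project_fst_eq_None_iff [simp]:
  "i < length s \<Longrightarrow> project_fst q' s ! i = None \<longleftrightarrow> s ! i = None"
  by (simp add: project_fst_def)

lemma weight_project_fst [simp]: "weight (project_fst q' s) = weight s"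
  by (simp add: weight_def project_fst_def filter_map comp_def)

lemma project_fst_merge:
  "0 < q' \<Longrightarrow> length b = weight a \<Longrightarrow> \<forall>y\<in>set b. y < q' \<Longrightarrow> project_fst q' (merge q' a b) = a"
proof (induction q' a b rule: merge.induct)
  case (3 q' x as bs)
  then obtain c cs where "bs = c # cs" by (cases bs) auto
  with 3 show ?case by (simp add: pair_code_def)
qed auto

lemma merge_project_fst_second_coords: "merge q' (project_fst q' s) (second_coords q' s) = s"
  by (induction q' s rule: second_coords.induct) (auto simp: pair_code_def)

lemma length_second_coords: "length (second_coords q' s) = weight s"
  by (induction q' s rule: second_coords.induct) auto

lemma second_coords_less: "0 < q' \<Longrightarrow> y \<in> set (second_coords q' s) \<Longrightarrow> y < q'"
  by (induction q' s rule: second_coords.induct) auto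

lemma project_fst_in_words_iff:
  "0 < q' \<Longrightarrow> project_fst q' s \<in> words q n \<longleftrightarrow> s \<in> words (q * q') n"
  by (auto simp: words_def project_fst_def div_less_iff_less_mult split: option.splits)

lemma extends_project_fst: "extends u s \<Longrightarrow> extends (project_fst q' u) (project_fst q' s)"
  by (auto simp: extends_def project_fst_def)

lemma product_design_eq_preimage:
  assumes "0 < q'" and "\<forall>a\<in>S. weight a = t"
  shows "product_design q' t S = {s. project_fst q' s \<in> S}"
proof (intro set_eqI iffI)
  fix s assume "s \<in> product_design q' t S"
  then obtain a b where "s = merge q' a b" "a \<in> S" "length b = t" "\<forall>y\<in>set b. y < q'"
    by (auto simp: product_design_def)
  with assms show "s \<in> {s. project_fst q' s \<in> S}" by (simp add: project_fst_merge)
next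
  fix s assume "s \<in> {s. project_fst q' s \<in> S}"
  with assms have "project_fst q' s \<in> S" "length (second_coords q' s) = t"
    by (auto simp: length_second_coords)
  with assms(1) show "s \<in> product_design q' t S"
    unfolding product_design_def mem_Collect_eq
    by (metis merge_project_fst_second_coords second_coords_less)
qed

lemma extends_restrict_support: "length a = length u \<Longrightarrow> extends u (restrict_support a u)"
  by (auto simp: extends_def restrict_support_def)

lemma project_fst_restrict_support:
  assumes "extends (project_fst q' u) a"
  shows "project_fst q' (restrict_support a u) = a"
proof (rule nth_equalityI)
  have len: "length a = length u" using assms by (simp add: extends_def)
  then show "length (project_fst q' (restrict_support a u)) = length a" by (simp add: restrict_support_def)
  fix i assume "i < length (project_fst q' (restrict_support a u))"
  with len have i: "i < length a" by (simp add: restrict_support_def)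
  show "project_fst q' (restrict_support a u) ! i = a ! i"
  proof (cases "a ! i")
    case (Some x)
    with assms i have "project_fst q' u ! i = a ! i" by (auto simp: extends_def)
    with i len Some show ?thesis by (simp add: restrict_support_def project_fst_def)
  qed (use i len in \<open>simp add: restrict_support_def project_fst_def\<close>)
qed

text \<open>A word extended by \<open>u\<close> is determined by its star pattern, and projection keeps that pattern.\<close>
lemma extends_project_fst_inj:
  assumes "extends u s" and "extends u s'" and "project_fst q' s = project_fst q' s'"
  shows "s = s'"
proof (rule nth_equalityI)
  show len: "length s = length s'" using assms by (simp add: extends_def)
  fix i assume i: "i < length s"
  have "s ! i = None \<longleftrightarrow> s' ! i = None"
    using i len assms(3) nth_project_fst_eq_None_iff by metis
  with assms i len show "s ! i = s' ! i" by (cases "s ! i = None") (auto simp: extends_def)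
qed

lemma ex1_extends_preimage:
  assumes "\<exists>!a. a \<in> S \<and> extends (project_fst q' u) a"
  shows "\<exists>!s. project_fst q' s \<in> S \<and> extends u s"
proof -
  obtain a where a: "a \<in> S" "extends (project_fst q' u) a"
    and a_unique: "\<And>a'. a' \<in> S \<Longrightarrow> extends (project_fst q' u) a' \<Longrightarrow> a' = a"
    using assms by blast
  have "length a = length u" using a(2) by (simp add: extends_def)
  then have restricted:
      "project_fst q' (restrict_support a u) \<in> S" "extends u (restrict_support a u)"
    using a project_fst_restrict_support extends_restrict_support by auto
  show ?thesis
  proof (rule ex1I[of _ "restrict_support a u"])
    fix s assume s: "project_fst q' s \<in> S \<and> extends u s"
    then have "project_fst q' s = project_fst q' (restrict_support a u)"
      using a_unique extends_project_fst restricted by metis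
    with s restricted show "s = restrict_support a u" using extends_project_fst_inj by blast
  qed (use restricted in blast)
qed

lemma is_design_preimage_project_fst:
  assumes "0 < q'" and "is_design n q w t S"
  shows "is_design n (q * q') w t {s. project_fst q' s \<in> S}"
  unfolding is_design_def
proof (intro conjI ballI impI)
  show "{s. project_fst q' s \<in> S} \<subseteq> words (q * q') n"
    using assms by (auto simp: is_design_def project_fst_in_words_iff[symmetric])
  show "weight s = t" if "s \<in> {s. project_fst q' s \<in> S}" for s
    using assms(2) that by (auto simp: is_design_def)
  fix u assume "u \<in> words (q * q') n" "weight u = w"
  then have "project_fst q' u \<in> words q n" "weight (project_fst q' u) = w"
    using assms(1) by (simp_all add: project_fst_in_words_iff)
  with assms(2) have "\<exists>!a. a \<in> S \<and> extends (project_fst q' u) a"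
    by (simp add: is_design_def)
  then show "\<exists>!s. s \<in> {s. project_fst q' s \<in> S} \<and> extends u s"
    unfolding mem_Collect_eq by (rule ex1_extends_preimage)
qed

theorem proposition3:
  fixes n q q' w t :: nat and S :: "nat option list set"
  assumes "1 \<le> t" and "t \<le> w" and "w \<le> n" and "1 \<le> q" and "1 \<le> q'"
    and "is_design n q w t S"
  shows "is_design n (q * q') w t (product_design q' t S)"
proof -
  have "0 < q'" using assms(5) by simp
  moreover have "\<forall>a\<in>S. weight a = t" using assms(6) by (simp add: is_design_def)
  ultimately show ?thesis
    using assms(6) by (simp add: product_design_eq_preimage is_design_preimage_project_fst)
qed

end
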